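(* Let $\mathcal{B}$ be a finite relational structure with domain $B$ and let $b\in B$ be such that the shop $\forall_b$ is a she of $\mathcal{B}$. Let $\varphi(u,v_1,\ldots,v_k)$ be a formula of $\{\exists,\forall,\wedge,\vee\}$-FO. Then for all $x_1,\ldots,x_k\in B$: $\mathcal{B}\models\forall u\,\varphi(u,x_1,\ldots,x_k)$ if and only if $\mathcal{B}\models\varphi(b,x_1,\ldots,x_k)$.
   Context: $\{\exists,\forall,\wedge,\vee\}$-FO is the positive equality-free fragment of first-order logic over the signature of $\mathcal{B}$: formulas built from atomic formulas $R(w_1,\ldots,w_r)$ using only $\wedge,\vee,\exists,\forall$. A shop on $B$ is a map $f:B\to\mathcal{P}(B)\setminus\{\emptyset\}$ such that every $y\in B$ lies in some $f(x)$. A she of $\mathcal{B}$ is a shop $f$ such that for every relation $R$ of $\mathcal{B}$ of arity $i$, if $\mathcal{B}\models R(x_1,\ldots,x_i)$ then $\mathcal{B}\models R(y_1,\ldots,y_i)$ for all $y_j\in f(x_j)$. The shop $\forall_b$ is defined by $\forall_b(b)=B$ and $\forall_b(x)=\{x\}$ for $x\neq b$. *)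

theory Defs
  imports Main
begin

definition rel_structure :: "'a set \<Rightarrow> ('r \<Rightarrow> nat) \<Rightarrow> ('r \<Rightarrow> 'a list set) \<Rightarrow> bool" where
  "rel_structure B ar Rel \<longleftrightarrow> B \<noteq> {} \<and>
     (\<forall>R. \<forall>xs\<in>Rel R. length xs = ar R \<and> set xs \<subseteq> B)"

datatype 'r pfo =
    Atom 'r "nat list"
  | Conj "'r pfo" "'r pfo"
  | Disj "'r pfo" "'r pfo"
  | Ex nat "'r pfo"
  | All nat "'r pfo"

fun fv :: "'r pfo \<Rightarrow> nat set" where
  "fv (Atom R ws) = set ws"
| "fv (Conj p q) = fv p \<union> fv q"
| "fv (Disj p q) = fv p \<union> fv q"
| "fv (Ex x p) = fv p - {x}"
| "fv (All x p) = fv p - {x}"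

fun wf_pfo :: "('r \<Rightarrow> nat) \<Rightarrow> 'r pfo \<Rightarrow> bool" where
  "wf_pfo ar (Atom R ws) = (length ws = ar R)"
| "wf_pfo ar (Conj p q) = (wf_pfo ar p \<and> wf_pfo ar q)"
| "wf_pfo ar (Disj p q) = (wf_pfo ar p \<and> wf_pfo ar q)"
| "wf_pfo ar (Ex x p) = wf_pfo ar p"
| "wf_pfo ar (All x p) = wf_pfo ar p"

fun sat :: "'a set \<Rightarrow> ('r \<Rightarrow> 'a list set) \<Rightarrow> 'r pfo \<Rightarrow> (nat \<Rightarrow> 'a) \<Rightarrow> bool" where
  "sat B Rel (Atom R ws) s = (map s ws \<in> Rel R)"
| "sat B Rel (Conj p q) s = (sat B Rel p s \<and> sat B Rel q s)"
| "sat B Rel (Disj p q) s = (sat B Rel p s \<or> sat B Rel q s)"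
| "sat B Rel (Ex x p) s = (\<exists>a\<in>B. sat B Rel p (s(x := a)))"
| "sat B Rel (All x p) s = (\<forall>a\<in>B. sat B Rel p (s(x := a)))"

definition shop :: "'a set \<Rightarrow> ('a \<Rightarrow> 'a set) \<Rightarrow> bool" where
  "shop B f \<longleftrightarrow> (\<forall>x\<in>B. f x \<noteq> {} \<and> f x \<subseteq> B) \<and> (\<forall>y\<in>B. \<exists>x\<in>B. y \<in> f x)"

definition she :: "'a set \<Rightarrow> ('r \<Rightarrow> 'a list set) \<Rightarrow> ('a \<Rightarrow> 'a set) \<Rightarrow> bool" where
  "she B Rel f \<longleftrightarrow> shop B f \<and>
     (\<forall>R. \<forall>xs\<in>Rel R. \<forall>ys. length ys = length xs \<and> (\<forall>j<length xs. ys ! j \<in> f (xs ! j))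
        \<longrightarrow> ys \<in> Rel R)"

definition forall_shop :: "'a set \<Rightarrow> 'a \<Rightarrow> 'a \<Rightarrow> 'a set" where
  "forall_shop B b x = (if x = b then B else {x})"

end

theory Submission
  imports Defs
begin

text \<open>Satisfaction of positive equality-free formulas is preserved when every variable is
  moved from its value x to any element of f x, for a she f. The she \<open>\<forall>\<^sub>b\<close> may move
  the value b of u to an arbitrary element while fixing all other values, so truth at u = b
  spreads to every value of u.\<close>

lemma sat_she_transfer:
  assumes she: "she B Rel f"
    and "sat B Rel \<phi> s" and "\<forall>i. s' i \<in> f (s i)"
  shows "sat B Rel \<phi> s'"
  using assms(2,3)
proof (induction \<phi> arbitrary: s s')
  case (Atom R ws)
  then have "map s ws \<in> Rel R" and "\<forall>j<length (map s ws). map s' ws ! j \<in> f (map s ws ! j)"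
    by simp_all
  then have "map s' ws \<in> Rel R"
    using she unfolding she_def by (metis length_map)
  then show ?case by simp
next
  case (Conj p q)
  then show ?case by (metis sat.simps(2))
next
  case (Disj p q)
  then show ?case by (metis sat.simps(3))
next
  case (Ex x p)
  from Ex.prems(1) obtain a where a: "a \<in> B" "sat B Rel p (s(x := a))" by auto
  with she obtain a' where "a' \<in> f a" "a' \<in> B"
    unfolding she_def shop_def by blast
  moreover have "sat B Rel p (s'(x := a'))"
    using Ex.IH[OF a(2)] Ex.prems(2) \<open>a' \<in> f a\<close> by simp
  ultimately show ?case by auto
next
  case (All x p)
  show ?case
  proof (simp, intro ballI)
    fix a' assume "a' \<in> B"
    with she obtain a where a: "a \<in> B" "a' \<in> f a"
      unfolding she_def shop_def by blast
    with All.prems(1) have "sat B Rel p (s(x := a))" by simp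
    moreover have "\<forall>i. (s'(x := a')) i \<in> f ((s(x := a)) i)"
      using All.prems(2) a(2) by simp
    ultimately show "sat B Rel p (s'(x := a'))" by (rule All.IH)
  qed
qed

lemma fun_upd_in_forall_shop:
  assumes "\<forall>i. s i \<in> B" and "a \<in> B" and "b \<in> B"
  shows "\<forall>i. (s(u := a)) i \<in> forall_shop B b ((s(u := b)) i)"
  using assms by (simp add: forall_shop_def)

theorem lemma3p1:
  fixes B :: "'a set" and ar :: "'r \<Rightarrow> nat" and Rel :: "'r \<Rightarrow> 'a list set"
    and b :: 'a and \<phi> :: "'r pfo" and u :: nat and vs :: "nat list"
  assumes "rel_structure B ar Rel" and "finite B"
    and "b \<in> B" and "she B Rel (forall_shop B b)"
    and "wf_pfo ar \<phi>" and "u \<notin> set vs" and "distinct vs"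
    and "fv \<phi> \<subseteq> insert u (set vs)"
  shows "\<forall>s. (\<forall>i. s i \<in> B) \<longrightarrow>
           ((\<forall>a\<in>B. sat B Rel \<phi> (s(u := a))) \<longleftrightarrow> sat B Rel \<phi> (s(u := b)))"
proof (intro allI impI iffI ballI)
  fix s assume "\<forall>a\<in>B. sat B Rel \<phi> (s(u := a))"
  then show "sat B Rel \<phi> (s(u := b))" using \<open>b \<in> B\<close> by blast
next
  fix s a assume "\<forall>i. s i \<in> B" "sat B Rel \<phi> (s(u := b))" "a \<in> B"
  then show "sat B Rel \<phi> (s(u := a))"
    using sat_she_transfer[OF assms(4)] fun_upd_in_forall_shop[OF _ _ \<open>b \<in> B\<close>] by metis
qed

end
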